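(* Let $m<n$ and $1\le k\le n$. Then $$\chi(X(k,n,m))=\sum_{k_1+k_2=k}t^{k_2(m-k_1)+\frac12k_2(n-m-k_2)}\chi_{\Lambda^{k_2}(\mathbb{C}^{n-m})}(t^{\rho_{n-m}})\,\chi(X^\vee(k_1,n,m)),$$ where terms involving empty spaces are omitted.
   Context: For a $k$-dimensional space $K$: $X(k,n,m)=\{(I,J)\in\mathrm{Hom}(\mathbb{C}^m_x,K)\oplus\mathrm{Hom}^{\mathrm{st}}(K,\mathbb{C}^n_y)\}/GL(K)$ with $J$ injective, and $X^\vee(k_1,n,m)$ is defined the same way with $\dim K=k_1$ but with the stability on $I$ (i.e. $I:\mathbb{C}^m_x\to K$ surjective, $J$ arbitrary). $\chi(Y)=\chi(Y,\sum_i(-t)^i\Omega^i_Y)$ is the Hirzebruch genus, equivariant for $\mathbb{C}^\times_q\times T_x\times T_y$ ($T_x\subset GL_m$, $T_y\subset GL_n$ maximal tori), defined by localization as a rational function; $\mathbb{C}^\times_q$ scales $\mathrm{Hom}(\mathbb{C}^m_x,K)$ with weight $+1$ and acts trivially on $\mathrm{Hom}(K,\mathbb{C}^n_y)$. $\rho_N=\mathrm{diag}(\frac{N-1}{2},\dots,\frac{1-N}{2})$ and $\chi_{\Lambda^{j}(\mathbb{C}^N)}(t^{\rho_N})$ is the character of $\Lambda^j(\mathbb{C}^N)$ at $\mathrm{diag}(t^{(N-1)/2},\dots,t^{(1-N)/2})$. *)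

theory Defs
  imports "HOL-Analysis.Analysis" "HOL-Library.Multiset"
begin

text \<open>Equivariant Hirzebruch genus chi(Y, sum_i (-t)^i Omega^i_Y), defined by localization:
  each isolated fixed point p with tangent weights W p contributes
  prod over w in W p of (1 - t w^{-1}) / (1 - w^{-1}).  Equivariant parameters are evaluated
  at generic complex numbers: q (for C^x_q), x a (a < m, for T_x), y j (j < n, for T_y).\<close>

definition hirz_factor :: "complex \<Rightarrow> complex \<Rightarrow> complex" where
  "hirz_factor t w = (1 - t / w) / (1 - 1 / w)"

definition loc_genus :: "complex \<Rightarrow> 'p set \<Rightarrow> ('p \<Rightarrow> complex multiset) \<Rightarrow> complex" where
  "loc_genus t P W = (\<Sum>p\<in>P. prod_mset (image_mset (hirz_factor t) (W p)))"

text \<open>X(k,n,m): J injective, so X is the bundle Hom(C^m, K) over Gr(k,n).  Fixed points are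
  coordinate subspaces K = span(e_i, i in S), S subset of {..<n} with card S = k (and I = 0).
  Tangent weights: Hom(K, C^n/K) gives y j / y i (i in S, j not in S);
  Hom(C^m_x, K) gives q * y i / x a (i in S, a < m).\<close>

definition fixX :: "nat \<Rightarrow> nat \<Rightarrow> nat set set" where
  "fixX k n = {S. S \<subseteq> {..<n} \<and> card S = k}"

definition tangX :: "nat \<Rightarrow> nat \<Rightarrow> complex \<Rightarrow> (nat \<Rightarrow> complex) \<Rightarrow> (nat \<Rightarrow> complex)
    \<Rightarrow> nat set \<Rightarrow> complex multiset" where
  "tangX n m q x y S =
     image_mset (\<lambda>(i, j). y j / y i) (mset_set (S \<times> ({..<n} - S)))
   + image_mset (\<lambda>(i, a). q * y i / x a) (mset_set (S \<times> {..<m}))"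

definition chiX :: "nat \<Rightarrow> nat \<Rightarrow> nat \<Rightarrow> complex \<Rightarrow> complex \<Rightarrow> (nat \<Rightarrow> complex)
    \<Rightarrow> (nat \<Rightarrow> complex) \<Rightarrow> complex" where
  "chiX k n m t q x y = loc_genus t (fixX k n) (tangX n m q x y)"

text \<open>X^vee(k1,n,m): I surjective, so X^vee is the bundle Hom(K, C^n) over the Grassmannian of
  k1-dimensional quotients K of C^m.  Fixed points: ker I = span(e_b, b not in S),
  S subset of {..<m}, card S = k1; K then carries weights x a / q (a in S).
  Tangent weights: Hom(ker I, K) gives x a / x b (a in S, b < m not in S);
  Hom(K, C^n_y) gives q * y j / x a (a in S, j < n).\<close>

definition fixXv :: "nat \<Rightarrow> nat \<Rightarrow> nat set set" where
  "fixXv k1 m = {S. S \<subseteq> {..<m} \<and> card S = k1}"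

definition tangXv :: "nat \<Rightarrow> nat \<Rightarrow> complex \<Rightarrow> (nat \<Rightarrow> complex) \<Rightarrow> (nat \<Rightarrow> complex)
    \<Rightarrow> nat set \<Rightarrow> complex multiset" where
  "tangXv n m q x y S =
     image_mset (\<lambda>(a, b). x a / x b) (mset_set (S \<times> ({..<m} - S)))
   + image_mset (\<lambda>(a, j). q * y j / x a) (mset_set (S \<times> {..<n}))"

definition chiXv :: "nat \<Rightarrow> nat \<Rightarrow> nat \<Rightarrow> complex \<Rightarrow> complex \<Rightarrow> (nat \<Rightarrow> complex)
    \<Rightarrow> (nat \<Rightarrow> complex) \<Rightarrow> complex" where
  "chiXv k1 n m t q x y = loc_genus t (fixXv k1 m) (tangXv n m q x y)"

text \<open>Character of Lambda^j(C^N) at diag(t^((N-1)/2), ..., t^((1-N)/2)), where s = t^(1/2):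
  the i-th diagonal entry (i < N) is s powi (N - 1 - 2 i).\<close>

definition char_wedge_rho :: "nat \<Rightarrow> nat \<Rightarrow> complex \<Rightarrow> complex" where
  "char_wedge_rho j N s =
     (\<Sum>A\<in>{A. A \<subseteq> {..<N} \<and> card A = j}. \<Prod>i\<in>A. s powi (int N - 1 - 2 * int i))"

text \<open>Genericity of the evaluation point (all tangent weights at all fixed points are \<noteq> 0, 1).\<close>

definition generic_point :: "nat \<Rightarrow> nat \<Rightarrow> complex \<Rightarrow> (nat \<Rightarrow> complex) \<Rightarrow> (nat \<Rightarrow> complex) \<Rightarrow> bool" where
  "generic_point n m q x y \<longleftrightarrow> q \<noteq> 0 \<and> (\<forall>a<m. x a \<noteq> 0) \<and> (\<forall>j<n. y j \<noteq> 0)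
     \<and> inj_on x {..<m} \<and> inj_on y {..<n} \<and> (\<forall>a<m. \<forall>j<n. q * y j \<noteq> x a)"

end

theory Submission
  imports Defs "HOL-Complex_Analysis.Complex_Analysis"
begin

(* Both sides are sums over torus fixed points, hence rational functions of the equivariant
  parameters, and the identity is proved for all k and all index sets N, M with
  card M \<le> card N, by induction on card N + card M.  Fix p \<in> N and replace y p by a variable u.
  The difference of the two sides is bounded at infinity and has at most simple poles, at the
  other y i and at the x a / q.  At y i the contributions of fixed points containing exactly one
  of p, i cancel; at x a / q both residues reduce to the identity for (N - {p}, M - {a}).  So the
  difference is constant (Liouville), and at u = 0 it vanishes by the identity for (N - {p}, M)
  and the q-Pascal rule for the Gaussian binomials; if card M = card N, the duality between X and
  X^vee (exchanging x and y, and inverting them) gives the identity for (M, N - {p}) instead.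
  The coefficient t^((k - k1)(m - k1)) [n - m, k - k1]_t finally agrees with the one in the
  statement, since the Gaussian binomial is the normalized character of the exterior power. *)

(* D has at most a simple pole at c, with residue 0. *)
definition removable_pole :: "(complex \<Rightarrow> complex) \<Rightarrow> complex set \<Rightarrow> complex \<Rightarrow> bool" where
  "removable_pole D P c \<longleftrightarrow> (\<exists>H. H holomorphic_on UNIV - (P - {c}) \<and> H c = 0 \<and>
     (\<forall>u. u \<notin> P \<longrightarrow> (u - c) * D u = H u))"

lemma eq_limit_at_infinity_if_poles_removable:
  fixes D :: "complex \<Rightarrow> complex"
  assumes P: "finite P" and hol: "D holomorphic_on UNIV - P"
    and lim: "(D \<longlongrightarrow> l) at_infinity"
    and removable: "\<And>c. c \<in> P \<Longrightarrow> removable_pole D P c"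
    and u: "u \<notin> P"
  shows "D u = l"
proof -
  have bounded_near_poles: "D \<in> O[at c](\<lambda>_. 1)" if c: "c \<in> P" for c
  proof -
    obtain H where H: "H holomorphic_on UNIV - (P - {c})" "H c = 0"
      "\<And>u. u \<notin> P \<Longrightarrow> (u - c) * D u = H u" using removable[OF c] unfolding removable_pole_def by blast
    have open_nbhd: "open (UNIV - (P - {c}))" using P by (simp add: open_Diff finite_imp_closed)
    then obtain H' where "(H has_field_derivative H') (at c)"
      using H(1) holomorphic_on_imp_differentiable_at field_differentiable_def by blast
    hence "((\<lambda>u. (H u - H c) / (u - c)) \<longlongrightarrow> H') (at c)"
      by (simp add: has_field_derivative_iff)
    moreover have "eventually (\<lambda>u. u \<in> UNIV - (P - {c}) - {c}) (at c)"
      using open_nbhd by (intro eventually_at_in_open) auto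
    hence "eventually (\<lambda>u. (H u - H c) / (u - c) = D u) (at c)"
    proof eventually_elim
      case (elim u)
      hence "u \<noteq> c" "u \<notin> P" by auto
      thus ?case using H(2) H(3) by (simp add: field_simps)
    qed
    ultimately have "(D \<longlongrightarrow> H') (at c)" using Lim_transform_eventually by blast
    thus ?thesis by (intro bigoI_tendsto[where c = H']) auto
  qed
  obtain g where g: "g holomorphic_on UNIV" "\<forall>z\<in>UNIV - P. g z = D z"
    using removable_singularities[of P UNIV D] P hol bounded_near_poles by auto
  have "eventually (\<lambda>z. z \<notin> P) at_infinity"
  proof -
    obtain B where "\<forall>z\<in>P. norm z \<le> B" using P finite_imp_bounded bounded_iff by blast
    thus ?thesis unfolding eventually_at_infinity
      by (intro exI[of _ "B+1"]) force
  qed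
  hence "eventually (\<lambda>z. D z = g z) at_infinity" by eventually_elim (use g in auto)
  hence "(g \<longlongrightarrow> l) at_infinity" using lim Lim_transform_eventually by blast
  hence "g u = l" using Liouville_weak g(1) by blast
  thus ?thesis using g u by auto
qed

lemma holomorphic_on_If_const [holomorphic_intros]:
  "(b \<Longrightarrow> f holomorphic_on A) \<Longrightarrow> (\<not> b \<Longrightarrow> g holomorphic_on A) \<Longrightarrow>
    (\<lambda>z. if b then f z else g z) holomorphic_on A"
  by (cases b) auto

(* hirz_factor t (a / b), in a form that still makes sense for a = 0, where the deformed genus
  is evaluated. *)
definition hirz_ratio :: "complex \<Rightarrow> complex \<Rightarrow> complex \<Rightarrow> complex" where
  "hirz_ratio t a b = (a - t * b) / (a - b)"

lemma hirz_factor_divide: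
  assumes "a \<noteq> 0" "b \<noteq> 0"
  shows "hirz_factor t (a / b) = hirz_ratio t a b"
proof -
  have "1 - t / (a / b) = (a - t * b) / a" "1 - 1 / (a / b) = (a - b) / a"
    using assms by (simp_all add: field_simps)
  thus ?thesis unfolding hirz_factor_def hirz_ratio_def using assms by simp
qed

lemma hirz_ratio_scale: "c \<noteq> 0 \<Longrightarrow> hirz_ratio t (c * a) (c * b) = hirz_ratio t a b"
  unfolding hirz_ratio_def
  by (metis (no_types, lifting) mult.left_commute mult_divide_mult_cancel_left right_diff_distrib)

lemma hirz_ratio_0_left: "b \<noteq> 0 \<Longrightarrow> hirz_ratio t 0 b = t"
  unfolding hirz_ratio_def by simp

lemma hirz_ratio_0_right: "b \<noteq> 0 \<Longrightarrow> hirz_ratio t b 0 = 1"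
  unfolding hirz_ratio_def by simp

lemma holomorphic_on_hirz_ratio [holomorphic_intros]:
  assumes "f holomorphic_on A" "g holomorphic_on A" "\<And>u. u \<in> A \<Longrightarrow> f u \<noteq> g u"
  shows "(\<lambda>u. hirz_ratio t (f u) (g u)) holomorphic_on A"
  unfolding hirz_ratio_def using assms by (intro holomorphic_intros) auto

lemma tendsto_hirz_ratio_left_at_infinity:
  assumes "filterlim g at_infinity at_infinity"
  shows "((\<lambda>u. hirz_ratio t (g u) b) \<longlongrightarrow> 1) at_infinity"
proof -
  have "filterlim (\<lambda>u. g u - b) at_infinity at_infinity"
    using tendsto_add_filterlim_at_infinity'[OF assms tendsto_const, of "- b"] by simp
  hence "((\<lambda>u. 1 + (b - t * b) * inverse (g u - b)) \<longlongrightarrow> 1 + (b - t * b) * 0) at_infinity"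
    by (intro tendsto_intros filterlim_compose[OF tendsto_inverse_0])
  moreover have "eventually (\<lambda>u. g u \<noteq> b) at_infinity"
    using assms filterlim_at_infinity_imp_eventually_ne by blast
  hence "eventually (\<lambda>u. 1 + (b - t * b) * inverse (g u - b) = hirz_ratio t (g u) b) at_infinity"
    by eventually_elim (auto simp: hirz_ratio_def field_simps)
  ultimately show ?thesis using Lim_transform_eventually by fastforce
qed

lemma hirz_ratio_swap: "a \<noteq> b \<Longrightarrow> hirz_ratio t b a = 1 + t - hirz_ratio t a b"
  unfolding hirz_ratio_def by (simp add: field_simps)

lemma tendsto_hirz_ratio_right_at_infinity:
  assumes "filterlim g at_infinity at_infinity"
  shows "((\<lambda>u. hirz_ratio t b (g u)) \<longlongrightarrow> t) at_infinity"
proof -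
  have "((\<lambda>u. 1 + t - hirz_ratio t (g u) b) \<longlongrightarrow> 1 + t - 1) at_infinity"
    by (intro tendsto_intros tendsto_hirz_ratio_left_at_infinity assms)
  moreover have "eventually (\<lambda>u. g u \<noteq> b) at_infinity"
    using assms filterlim_at_infinity_imp_eventually_ne by blast
  hence "eventually (\<lambda>u. 1 + t - hirz_ratio t (g u) b = hirz_ratio t b (g u)) at_infinity"
    by eventually_elim (rule hirz_ratio_swap[symmetric])
  ultimately show ?thesis using Lim_transform_eventually by fastforce
qed

lemma removable_pole_hirz_ratio_pair:
  assumes "c \<in> P" and holo: "A holomorphic_on UNIV - (P - {c})" "B1 holomorphic_on UNIV - (P - {c})"
      "B2 holomorphic_on UNIV - (P - {c})"
    and "B1 c = B2 c"
    and D: "\<And>u. u \<notin> P \<Longrightarrow> D u = A u + hirz_ratio t u c * B1 u + hirz_ratio t c u * B2 u"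
  shows "removable_pole D P c"
  unfolding removable_pole_def
proof (intro exI conjI allI impI)
  show "(\<lambda>u. (u - c) * A u + (u - t * c) * B1 u + (t * u - c) * B2 u) holomorphic_on UNIV - (P - {c})"
    using holo by (intro holomorphic_intros)
  show "(c - c) * A c + (c - t * c) * B1 c + (t * c - c) * B2 c = 0"
    using assms(5) by (simp add: algebra_simps)
  fix u assume "u \<notin> P"
  hence "u \<noteq> c" using \<open>c \<in> P\<close> by auto
  hence "(u - c) * hirz_ratio t u c = u - t * c" "(u - c) * hirz_ratio t c u = t * u - c"
    unfolding hirz_ratio_def by (simp_all add: field_simps)
  thus "(u - c) * D u = (u - c) * A u + (u - t * c) * B1 u + (t * u - c) * B2 u"
    unfolding D[OF \<open>u \<notin> P\<close>] distrib_left mult.assoc[symmetric] by simp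
qed

lemma removable_pole_hirz_ratio_scaled:
  assumes "a / q \<in> P" and holo: "A holomorphic_on UNIV - (P - {a / q})" "B holomorphic_on UNIV - (P - {a / q})"
    and "q \<noteq> 0" "B (a / q) = 0"
    and D: "\<And>u. u \<notin> P \<Longrightarrow> D u = A u + hirz_ratio t (q * u) a * B u"
  shows "removable_pole D P (a / q)"
  unfolding removable_pole_def
proof (intro exI conjI allI impI)
  show "(\<lambda>u. (u - a / q) * A u + (u - t * a / q) * B u) holomorphic_on UNIV - (P - {a / q})"
    using holo by (intro holomorphic_intros)
  show "(a / q - a / q) * A (a / q) + (a / q - t * a / q) * B (a / q) = 0"
    using assms(5) by simp
  fix u assume "u \<notin> P"
  hence "q * u - a \<noteq> 0" using assms(1,4) by (auto simp: field_simps)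
  moreover have "u - a / q = (q * u - a) / q" "u - t * a / q = (q * u - t * a) / q"
    using assms(4) by (simp_all add: field_simps)
  ultimately have "(u - a / q) * hirz_ratio t (q * u) a = u - t * a / q"
    unfolding hirz_ratio_def by simp
  thus "(u - a / q) * D u = (u - a / q) * A u + (u - t * a / q) * B u"
    unfolding D[OF \<open>u \<notin> P\<close>] distrib_left mult.assoc[symmetric] by simp
qed

definition k_subsets :: "'a set \<Rightarrow> nat \<Rightarrow> 'a set set" where
  "k_subsets F k = {S. S \<subseteq> F \<and> card S = k}"

lemma finite_k_subsets: "finite F \<Longrightarrow> finite (k_subsets F k)"
  unfolding k_subsets_def by (rule finite_subset[of _ "Pow F"]) auto

lemma k_subsetsD: "S \<in> k_subsets F k \<Longrightarrow> finite F \<Longrightarrow> S \<subseteq> F \<and> finite S \<and> card S = k"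
  unfolding k_subsets_def by (auto intro: finite_subset)

lemma k_subsets_0: "finite F \<Longrightarrow> k_subsets F 0 = {{}}"
  unfolding k_subsets_def using finite_subset by (fastforce simp: card_eq_0_iff)

lemma k_subsets_eq_empty: "finite F \<Longrightarrow> card F < k \<Longrightarrow> k_subsets F k = {}"
  unfolding k_subsets_def using card_mono[of F] by (auto simp: not_less[symmetric])

lemma sum_k_subsets_insert:
  assumes F: "finite F" and a: "a \<notin> F"
  shows "sum f (k_subsets (insert a F) k) =
     sum f (k_subsets F k) + (if k = 0 then 0 else sum (\<lambda>S. f (insert a S)) (k_subsets F (k - 1)))"
proof (cases k)
  case 0
  thus ?thesis using F by (simp add: k_subsets_0)
next
  case (Suc k')
  have "k_subsets (insert a F) k = k_subsets F k \<union> insert a ` k_subsets F k'"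
  proof (intro equalityI subsetI)
    fix S assume S: "S \<in> k_subsets (insert a F) k"
    show "S \<in> k_subsets F k \<union> insert a ` k_subsets F k'"
    proof (cases "a \<in> S")
      case True
      hence "S = insert a (S - {a})" by auto
      moreover have "S - {a} \<in> k_subsets F k'" using S True Suc F
        by (auto simp: k_subsets_def card_Diff_singleton intro: finite_subset)
      ultimately show ?thesis by blast
    next
      case False
      thus ?thesis using S by (auto simp: k_subsets_def)
    qed
  next
    fix S assume "S \<in> k_subsets F k \<union> insert a ` k_subsets F k'"
    thus "S \<in> k_subsets (insert a F) k"
      using F a Suc by (auto simp: k_subsets_def finite_subset card_insert_if subset_iff)
  qed
  moreover have "k_subsets F k \<inter> insert a ` k_subsets F k' = {}"
    using a by (auto simp: k_subsets_def)
  moreover have "inj_on (insert a) (k_subsets F k')"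
    using a by (intro inj_onI) (auto simp: k_subsets_def insert_ident)
  ultimately show ?thesis
    using F Suc by (simp add: sum.union_disjoint finite_k_subsets sum.reindex)
qed

lemma sum_k_subsets_insert_prod:
  fixes g :: "'a \<Rightarrow> 'b::comm_semiring_1"
  assumes "finite F" "a \<notin> F"
  shows "(\<Sum>S\<in>k_subsets (insert a F) k. f S * (\<Prod>i\<in>S. g i)) =
    (\<Sum>S\<in>k_subsets F k. f S * (\<Prod>i\<in>S. g i))
    + (if k = 0 then 0 else g a * (\<Sum>S\<in>k_subsets F (k - 1). f (insert a S) * (\<Prod>i\<in>S. g i)))"
proof -
  have "(\<Sum>S\<in>k_subsets F j. f (insert a S) * (\<Prod>i\<in>insert a S. g i)) =
      g a * (\<Sum>S\<in>k_subsets F j. f (insert a S) * (\<Prod>i\<in>S. g i))" for j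
    unfolding sum_distrib_left
  proof (rule sum.cong[OF refl])
    fix S assume "S \<in> k_subsets F j"
    hence "finite S" "a \<notin> S" using k_subsetsD[of S F j] assms by auto
    thus "f (insert a S) * (\<Prod>i\<in>insert a S. g i) = g a * (f (insert a S) * (\<Prod>i\<in>S. g i))"
      by (simp add: ac_simps)
  qed
  thus ?thesis unfolding sum_k_subsets_insert[OF assms] by simp
qed

lemma sum_k_subsets_insert_prod_compl:
  fixes g :: "'a \<Rightarrow> 'b::comm_semiring_1"
  assumes "finite F" "a \<notin> F"
  shows "(\<Sum>S\<in>k_subsets (insert a F) k. f S * (\<Prod>j\<in>insert a F - S. g j)) =
    g a * (\<Sum>S\<in>k_subsets F k. f S * (\<Prod>j\<in>F - S. g j))
    + (if k = 0 then 0 else (\<Sum>S\<in>k_subsets F (k - 1). f (insert a S) * (\<Prod>j\<in>F - S. g j)))"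
proof -
  have "(\<Sum>S\<in>k_subsets F k. f S * (\<Prod>j\<in>insert a F - S. g j)) =
      g a * (\<Sum>S\<in>k_subsets F k. f S * (\<Prod>j\<in>F - S. g j))"
    unfolding sum_distrib_left
  proof (rule sum.cong[OF refl])
    fix S assume "S \<in> k_subsets F k"
    hence "insert a F - S = insert a (F - S)" "a \<notin> F - S"
      using k_subsetsD[of S F k] assms by auto
    thus "f S * (\<Prod>j\<in>insert a F - S. g j) = g a * (f S * (\<Prod>j\<in>F - S. g j))"
      using assms(1) by (simp add: ac_simps)
  qed
  moreover have "insert a F - insert a S = F - S" for S using assms(2) by auto
  ultimately show ?thesis unfolding sum_k_subsets_insert[OF assms] by simp
qed

section \<open>Gaussian binomials and exterior powers\<close>

fun gauss_binom :: "'a::comm_semiring_1 \<Rightarrow> nat \<Rightarrow> nat \<Rightarrow> 'a" where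
  "gauss_binom t 0 j = (if j = 0 then 1 else 0)"
| "gauss_binom t (Suc N) 0 = 1"
| "gauss_binom t (Suc N) (Suc j) = t ^ Suc j * gauss_binom t N (Suc j) + gauss_binom t N j"

lemma gauss_binom_0_right [simp]: "gauss_binom t N 0 = 1"
  by (cases N) auto

lemma gauss_binom_eq_0: "N < j \<Longrightarrow> gauss_binom t N j = 0"
proof (induction N arbitrary: j)
  case (Suc N)
  thus ?case by (cases j) auto
qed simp

lemma char_wedge_rho_k_subsets:
  "char_wedge_rho j N s = (\<Sum>A\<in>k_subsets {..<N} j. \<Prod>i\<in>A. s powi (int N - 1 - 2 * int i))"
  unfolding char_wedge_rho_def k_subsets_def ..

lemma char_wedge_rho_Suc_Suc:
  assumes s: "s \<noteq> 0"
  shows "char_wedge_rho (Suc j) (Suc N) s =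
     s ^ Suc j * char_wedge_rho (Suc j) N s + s powi (- int N) * s ^ j * char_wedge_rho j N s"
proof -
  have shift: "(\<Sum>A\<in>k_subsets {..<N} k. \<Prod>i\<in>A. s powi (int N - 2 * int i))
      = s ^ k * char_wedge_rho k N s" for k
    unfolding char_wedge_rho_k_subsets sum_distrib_left
  proof (rule sum.cong[OF refl])
    fix A assume "A \<in> k_subsets {..<N} k"
    hence A: "finite A" "card A = k" using k_subsetsD[of A "{..<N}" k] by auto
    have "s powi (int N - 2 * int i) = s * s powi (int N - 1 - 2 * int i)" for i
      using s power_int_add_1'[of s "int N - 1 - 2 * int i"] by (simp add: algebra_simps)
    thus "(\<Prod>i\<in>A. s powi (int N - 2 * int i)) = s ^ k * (\<Prod>i\<in>A. s powi (int N - 1 - 2 * int i))"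
      using A by (simp add: prod.distrib)
  qed
  define g where "g i = s powi (int (Suc N) - 1 - 2 * int i)" for i
  have g: "g = (\<lambda>i. s powi (int N - 2 * int i))" "g N = s powi (- int N)"
    unfolding g_def by auto
  have "char_wedge_rho (Suc j) (Suc N) s = (\<Sum>A\<in>k_subsets (insert N {..<N}) (Suc j). 1 * prod g A)"
    unfolding char_wedge_rho_k_subsets g_def lessThan_Suc by simp
  also have "\<dots> = (\<Sum>A\<in>k_subsets {..<N} (Suc j). prod g A) + g N * (\<Sum>A\<in>k_subsets {..<N} j. prod g A)"
    by (subst sum_k_subsets_insert_prod) simp_all
  also have "\<dots> = s ^ Suc j * char_wedge_rho (Suc j) N s + s powi (- int N) * (s ^ j * char_wedge_rho j N s)"
    unfolding g(2) unfolding g(1) shift ..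
  finally show ?thesis by (simp only: mult.assoc)
qed

lemma power2_power_eq_powi:
  fixes s :: "'a::division_ring"
  shows "(s\<^sup>2) ^ n = s powi (2 * int n)"
proof -
  have "(s\<^sup>2) ^ n = s ^ (2 * n)" by (rule power_mult[symmetric])
  also have "\<dots> = s powi int (2 * n)" by (rule power_int_of_nat[symmetric])
  finally show ?thesis by simp
qed

lemma char_wedge_rho_eq_gauss_binom:
  assumes s: "s \<noteq> 0"
  shows "s powi (int j * (int N - int j)) * char_wedge_rho j N s = gauss_binom (s\<^sup>2) N j"
proof (induction N arbitrary: j)
  case 0
  have "k_subsets {..<0::nat} j = (if j = 0 then {{}} else {})" unfolding k_subsets_def by auto
  thus ?case unfolding char_wedge_rho_k_subsets by simp
next
  case (Suc N)
  show ?case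
  proof (cases j)
    case 0
    thus ?thesis unfolding char_wedge_rho_k_subsets by (simp add: k_subsets_0)
  next
    case (Suc i)
    have powi_mult: "s powi a * s powi b = s powi c * s powi d" if "a + b = c + d" for a b c d
      using power_int_add[of s a b] power_int_add[of s c d] s that by simp
    define e where "e = int (Suc i) * (int (Suc N) - int (Suc i))"
    have "e + int (Suc i) = 2 * int (Suc i) + int (Suc i) * (int N - int (Suc i))"
      unfolding e_def by (simp add: algebra_simps)
    from powi_mult[OF this]
    have first: "s powi e * s ^ Suc i = (s\<^sup>2) ^ Suc i * s powi (int (Suc i) * (int N - int (Suc i)))"
      by (simp only: power_int_of_nat power2_power_eq_powi)
    have "- int N + int i = (int i - int N) + 0" "e + (int i - int N) = int i * (int N - int i) + 0"
      unfolding e_def by (simp_all add: algebra_simps)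
    from this[THEN powi_mult]
    have second: "s powi e * (s powi (- int N) * s ^ i) = s powi (int i * (int N - int i))"
      by (simp add: mult.assoc[symmetric])
    have "s powi e * char_wedge_rho (Suc i) (Suc N) s =
        (s powi e * s ^ Suc i) * char_wedge_rho (Suc i) N s
        + (s powi e * (s powi (- int N) * s ^ i)) * char_wedge_rho i N s"
      unfolding char_wedge_rho_Suc_Suc[OF s] by (simp only: distrib_left mult.assoc)
    also have "\<dots> = (s\<^sup>2) ^ Suc i * (s powi (int (Suc i) * (int N - int (Suc i))) * char_wedge_rho (Suc i) N s)
        + s powi (int i * (int N - int i)) * char_wedge_rho i N s"
      unfolding first second by (simp only: mult.assoc)
    finally show ?thesis unfolding Suc e_def Suc.IH by simp
  qed
qed

section \<open>Fixed-point sums\<close>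

(* chiX and chiXv with {..<n}, {..<m} replaced by arbitrary finite index sets, so that indices
  can be removed in the induction. *)
definition contrib_X :: "complex \<Rightarrow> complex \<Rightarrow> (nat \<Rightarrow> complex) \<Rightarrow> (nat \<Rightarrow> complex)
    \<Rightarrow> nat set \<Rightarrow> nat set \<Rightarrow> nat set \<Rightarrow> complex" where
  "contrib_X t q x y N M S =
     (\<Prod>i\<in>S. \<Prod>j\<in>N - S. hirz_ratio t (y j) (y i)) * (\<Prod>i\<in>S. \<Prod>a\<in>M. hirz_ratio t (q * y i) (x a))"

definition genus_X :: "complex \<Rightarrow> complex \<Rightarrow> (nat \<Rightarrow> complex) \<Rightarrow> (nat \<Rightarrow> complex)
    \<Rightarrow> nat set \<Rightarrow> nat set \<Rightarrow> nat \<Rightarrow> complex" where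
  "genus_X t q x y N M k = (\<Sum>S\<in>k_subsets N k. contrib_X t q x y N M S)"

definition contrib_Xv :: "complex \<Rightarrow> complex \<Rightarrow> (nat \<Rightarrow> complex) \<Rightarrow> (nat \<Rightarrow> complex)
    \<Rightarrow> nat set \<Rightarrow> nat set \<Rightarrow> nat set \<Rightarrow> complex" where
  "contrib_Xv t q x y N M T =
     (\<Prod>a\<in>T. \<Prod>b\<in>M - T. hirz_ratio t (x a) (x b)) * (\<Prod>a\<in>T. \<Prod>j\<in>N. hirz_ratio t (q * y j) (x a))"

definition genus_Xv :: "complex \<Rightarrow> complex \<Rightarrow> (nat \<Rightarrow> complex) \<Rightarrow> (nat \<Rightarrow> complex)
    \<Rightarrow> nat set \<Rightarrow> nat set \<Rightarrow> nat \<Rightarrow> complex" where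
  "genus_Xv t q x y N M k = (\<Sum>T\<in>k_subsets M k. contrib_Xv t q x y N M T)"

definition generic_on :: "complex \<Rightarrow> (nat \<Rightarrow> complex) \<Rightarrow> (nat \<Rightarrow> complex) \<Rightarrow> nat set \<Rightarrow> nat set \<Rightarrow> bool" where
  "generic_on q x y N M \<longleftrightarrow> q \<noteq> 0 \<and> (\<forall>a\<in>M. x a \<noteq> 0) \<and> (\<forall>j\<in>N. y j \<noteq> 0)
     \<and> inj_on x M \<and> inj_on y N \<and> (\<forall>a\<in>M. \<forall>j\<in>N. q * y j \<noteq> x a)"

lemma generic_point_iff_generic_on: "generic_point n m q x y \<longleftrightarrow> generic_on q x y {..<n} {..<m}"
  unfolding generic_point_def generic_on_def by auto

lemma generic_on_subset: "generic_on q x y N M \<Longrightarrow> N' \<subseteq> N \<Longrightarrow> M' \<subseteq> M \<Longrightarrow> generic_on q x y N' M'"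
  unfolding generic_on_def by (blast intro: inj_on_subset)

lemma generic_on_dual: "generic_on q x y N M \<Longrightarrow> generic_on q (\<lambda>j. 1 / y j) (\<lambda>a. 1 / x a) M N"
  unfolding generic_on_def inj_on_def by (auto simp: field_simps)

lemma prod_mset_image_pairs:
  "finite A \<Longrightarrow> finite B \<Longrightarrow>
    prod_mset (image_mset h (image_mset (\<lambda>(i, j). f i j) (mset_set (A \<times> B)))) = (\<Prod>i\<in>A. \<Prod>j\<in>B. h (f i j))"
  by (simp add: multiset.map_comp prod_unfold_prod_mset[symmetric] prod.cartesian_product
      case_prod_beta comp_def)

lemma chiX_eq_genus_X:
  assumes "generic_point n m q x y"
  shows "chiX k n m t q x y = genus_X t q x y {..<n} {..<m} k"
  unfolding chiX_def loc_genus_def genus_X_def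
proof (rule sum.cong)
  show "fixX k n = k_subsets {..<n} k" unfolding fixX_def k_subsets_def ..
next
  fix S assume "S \<in> k_subsets {..<n} k"
  hence S: "S \<subseteq> {..<n}" "finite S" using k_subsetsD[of S "{..<n}" k] by auto
  have "(\<Prod>i\<in>S. \<Prod>j\<in>{..<n} - S. hirz_factor t (y j / y i))
      = (\<Prod>i\<in>S. \<Prod>j\<in>{..<n} - S. hirz_ratio t (y j) (y i))"
    "(\<Prod>i\<in>S. \<Prod>a\<in>{..<m}. hirz_factor t (q * y i / x a)) = (\<Prod>i\<in>S. \<Prod>a\<in>{..<m}. hirz_ratio t (q * y i) (x a))"
    using S assms by (auto intro!: prod.cong hirz_factor_divide simp: generic_point_def)
  thus "prod_mset (image_mset (hirz_factor t) (tangX n m q x y S)) = contrib_X t q x y {..<n} {..<m} S"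
    unfolding tangX_def contrib_X_def image_mset_union prod_mset.union
    using S by (simp add: prod_mset_image_pairs)
qed

lemma chiXv_eq_genus_Xv:
  assumes "generic_point n m q x y"
  shows "chiXv k n m t q x y = genus_Xv t q x y {..<n} {..<m} k"
  unfolding chiXv_def loc_genus_def genus_Xv_def
proof (rule sum.cong)
  show "fixXv k m = k_subsets {..<m} k" unfolding fixXv_def k_subsets_def ..
next
  fix T assume "T \<in> k_subsets {..<m} k"
  hence T: "T \<subseteq> {..<m}" "finite T" using k_subsetsD[of T "{..<m}" k] by auto
  have "(\<Prod>a\<in>T. \<Prod>b\<in>{..<m} - T. hirz_factor t (x a / x b))
      = (\<Prod>a\<in>T. \<Prod>b\<in>{..<m} - T. hirz_ratio t (x a) (x b))"
    "(\<Prod>a\<in>T. \<Prod>j\<in>{..<n}. hirz_factor t (q * y j / x a)) = (\<Prod>a\<in>T. \<Prod>j\<in>{..<n}. hirz_ratio t (q * y j) (x a))"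
    using T assms by (auto intro!: prod.cong hirz_factor_divide simp: generic_point_def)
  thus "prod_mset (image_mset (hirz_factor t) (tangXv n m q x y T)) = contrib_Xv t q x y {..<n} {..<m} T"
    unfolding tangXv_def contrib_Xv_def image_mset_union prod_mset.union
    using T by (simp add: prod_mset_image_pairs)
qed

lemma genus_Xv_eq_genus_X_dual:
  assumes "generic_on q x y N M"
  shows "genus_Xv t q x y N M k = genus_X t q (\<lambda>j. 1 / y j) (\<lambda>a. 1 / x a) M N k"
  unfolding genus_Xv_def genus_X_def
proof (rule sum.cong[OF refl])
  fix T assume T: "T \<in> k_subsets M k"
  have x0: "x a \<noteq> 0" if "a \<in> M" for a using assms that by (auto simp: generic_on_def)
  have y0: "y j \<noteq> 0" if "j \<in> N" for j using assms that by (auto simp: generic_on_def)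
  have "hirz_ratio t (x a) (x b) = hirz_ratio t (1 / x b) (1 / x a)" if "a \<in> M" "b \<in> M" for a b
    using hirz_ratio_scale[of "1 / (x a * x b)" t "x a" "x b"] x0 that by (simp add: field_simps)
  moreover have "hirz_ratio t (q * y j) (x a) = hirz_ratio t (q * (1 / x a)) (1 / y j)"
    if "a \<in> M" "j \<in> N" for a j
    using hirz_ratio_scale[of "1 / (x a * y j)" t "q * y j" "x a"] x0 y0 that by (simp add: field_simps)
  ultimately show "contrib_Xv t q x y N M T = contrib_X t q (\<lambda>j. 1 / y j) (\<lambda>a. 1 / x a) M N T"
    using T unfolding contrib_Xv_def contrib_X_def k_subsets_def
    by (intro arg_cong2[where f = "(*)"] prod.cong) auto
qed

lemma contrib_X_remove:
  assumes "finite N" "p \<in> N" "S \<subseteq> N - {p}"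
  shows "contrib_X t q x y N M S = contrib_X t q x y (N - {p}) M S * (\<Prod>i\<in>S. hirz_ratio t (y p) (y i))"
proof -
  have "N - S = insert p (N - {p} - S)" "p \<notin> N - {p} - S" using assms(2,3) by auto
  thus ?thesis using assms(1) unfolding contrib_X_def by (simp add: prod.distrib ac_simps)
qed

lemma contrib_X_insert:
  assumes "finite N" "p \<in> N" "S \<subseteq> N - {p}"
  shows "contrib_X t q x y N M (insert p S) = contrib_X t q x y (N - {p}) M S
      * (\<Prod>j\<in>N - {p} - S. hirz_ratio t (y j) (y p)) * (\<Prod>a\<in>M. hirz_ratio t (q * y p) (x a))"
proof -
  have "finite S" "p \<notin> S" "N - insert p S = N - {p} - S"
    using assms finite_subset by auto
  thus ?thesis unfolding contrib_X_def by (simp add: ac_simps)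
qed

lemma contrib_X_insert_mult:
  assumes "finite N" "i \<in> N" "S \<subseteq> N - {i}"
  shows "contrib_X t q x y N M (insert i S) * (\<Prod>j\<in>S. hirz_ratio t (y i) (y j))
    = contrib_X t q x y N M S * (\<Prod>a\<in>M. hirz_ratio t (q * y i) (x a))
      * (\<Prod>j\<in>N - {i} - S. hirz_ratio t (y j) (y i))"
  using contrib_X_insert[OF assms] contrib_X_remove[OF assms] by (simp add: ac_simps)

lemma contrib_X_remove_right:
  assumes "finite M" "a0 \<in> M"
  shows "contrib_X t q x y N M S = contrib_X t q x y N (M - {a0}) S * (\<Prod>i\<in>S. hirz_ratio t (q * y i) (x a0))"
  unfolding contrib_X_def prod.remove[OF assms] by (simp add: prod.distrib ac_simps)

lemma contrib_Xv_insert: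
  assumes "finite M" "a0 \<in> M" "T \<subseteq> M - {a0}"
  shows "contrib_Xv t q x y N M (insert a0 T) = contrib_Xv t q x y N (M - {a0}) T
     * (\<Prod>b\<in>M - {a0} - T. hirz_ratio t (x a0) (x b)) * (\<Prod>j\<in>N. hirz_ratio t (q * y j) (x a0))"
proof -
  have "finite T" "a0 \<notin> T" "M - insert a0 T = M - {a0} - T"
    using assms finite_subset by auto
  thus ?thesis unfolding contrib_Xv_def by (simp add: ac_simps)
qed

lemma contrib_Xv_remove_left:
  assumes "finite N" "p \<in> N"
  shows "contrib_Xv t q x y N M T = contrib_Xv t q x y (N - {p}) M T * (\<Prod>a\<in>T. hirz_ratio t (q * y p) (x a))"
  unfolding contrib_Xv_def prod.remove[OF assms] by (simp add: prod.distrib ac_simps)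

lemma genus_X_eq_0: "finite N \<Longrightarrow> card N < k \<Longrightarrow> genus_X t q x y N M k = 0"
  unfolding genus_X_def by (simp add: k_subsets_eq_empty)

lemma genus_X_0: "finite N \<Longrightarrow> genus_X t q x y N M 0 = 1"
  unfolding genus_X_def contrib_X_def by (simp add: k_subsets_0)

lemma genus_Xv_0: "finite M \<Longrightarrow> genus_Xv t q x y N M 0 = 1"
  unfolding genus_Xv_def contrib_Xv_def by (simp add: k_subsets_0)

definition expansion_coeff :: "'a::comm_semiring_1 \<Rightarrow> nat \<Rightarrow> nat \<Rightarrow> nat \<Rightarrow> nat \<Rightarrow> 'a" where
  "expansion_coeff t n m k k1 =
     (if k1 \<le> k then t ^ ((k - k1) * (m - k1)) * gauss_binom t (n - m) (k - k1) else 0)"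

definition Xv_expansion :: "complex \<Rightarrow> complex \<Rightarrow> (nat \<Rightarrow> complex) \<Rightarrow> (nat \<Rightarrow> complex)
    \<Rightarrow> nat set \<Rightarrow> nat set \<Rightarrow> nat \<Rightarrow> complex" where
  "Xv_expansion t q x y N M k =
     (\<Sum>k1\<le>card M. expansion_coeff t (card N) (card M) k k1 * genus_Xv t q x y N M k1)"

lemma Xv_expansion_0: "Xv_expansion t q x y N M 0 = genus_Xv t q x y N M 0"
  unfolding Xv_expansion_def expansion_coeff_def by (simp add: sum.atMost_shift)

lemma expansion_coeff_eq_0: "m \<le> n \<Longrightarrow> n < k \<Longrightarrow> k1 \<le> m \<Longrightarrow> expansion_coeff t n m k k1 = 0"
  unfolding expansion_coeff_def using gauss_binom_eq_0[of "n - m" "k - k1" t] by auto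

lemma expansion_coeff_Suc_Suc: "expansion_coeff t n (Suc m) (Suc k) (Suc i) = expansion_coeff t (n - 1) m k i"
proof -
  have "n - Suc m = n - 1 - m" by arith
  thus ?thesis unfolding expansion_coeff_def by simp
qed

lemma expansion_coeff_diag: "expansion_coeff t n n k k1 = (if k1 = k then 1 else 0)"
  unfolding expansion_coeff_def by (cases "k1 \<le> k") (auto simp: gauss_binom_eq_0)

lemma expansion_coeff_corank_1:
  assumes "K \<le> n"
  shows "expansion_coeff t (Suc n) n (Suc K) k1 =
    (if k1 = Suc K then 1 else if k1 = K then t ^ (n - K) else 0)"
proof -
  have "gauss_binom t 1 (Suc K - k1) = 0" if "k1 < K" using that by (intro gauss_binom_eq_0) auto
  thus ?thesis unfolding expansion_coeff_def by (auto simp: Suc_diff_le)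
qed

lemma expansion_coeff_pascal:
  assumes "m < n" "k1 \<le> m"
  shows "t ^ Suc K * expansion_coeff t (n - 1) m (Suc K) k1 + t ^ m * expansion_coeff t (n - 1) m K k1
    = expansion_coeff t n m (Suc K) k1 * t ^ k1"
proof -
  obtain n' where n': "n - m = Suc n'" "n - 1 - m = n'"
    using assms by (metis Suc_diff_Suc diff_Suc_1 diff_commute)
  consider "k1 \<le> K" | "k1 = Suc K" | "k1 > Suc K" by linarith
  thus ?thesis
  proof cases
    case 1
    define j d where "j = K - k1" and "d = m - k1"
    have "Suc K - k1 = Suc j" "K - k1 = j" "m - k1 = d" "Suc K = k1 + Suc j" "m = k1 + d"
      using 1 assms(2) unfolding j_def d_def by auto
    thus ?thesis using 1 unfolding expansion_coeff_def n' gauss_binom.simps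
      by (simp add: power_add algebra_simps)
  qed (auto simp: expansion_coeff_def)
qed

lemma expansion_coeff_eq_char_wedge_rho:
  assumes "s \<noteq> 0" "m \<le> n" "k1 \<le> k" "k1 \<le> m"
  shows "expansion_coeff (s\<^sup>2) n m k k1 =
    s powi (2 * int (k - k1) * (int m - int k1) + int (k - k1) * (int n - int m - int (k - k1)))
    * char_wedge_rho (k - k1) (n - m) s"
proof -
  obtain j d e where jde: "k = k1 + j" "m = k1 + d" "n = m + e"
    using assms by (metis le_add_diff_inverse)
  have "s powi (2 * int j * int d + int j * (int e - int j)) = s powi (2 * int (j * d)) * s powi (int j * (int e - int j))"
    using assms(1) by (simp add: power_int_add[symmetric] algebra_simps)
  thus ?thesis
    using char_wedge_rho_eq_gauss_binom[OF assms(1), of j e]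
    by (simp add: jde expansion_coeff_def power2_power_eq_powi mult.assoc)
qed

lemma sum_contrib_X_at_x_pole:
  assumes N: "finite N" and M: "finite M" "a0 \<in> M" and q: "q \<noteq> 0"
  shows "(\<Sum>S\<in>k_subsets N K. contrib_X t q x y N M S * (\<Prod>a\<in>M - {a0}. hirz_ratio t (x a0) (x a))
        * (\<Prod>j\<in>N - S. hirz_ratio t (y j) (x a0 / q)))
    = (\<Prod>j\<in>N. hirz_ratio t (q * y j) (x a0)) * (\<Prod>a\<in>M - {a0}. hirz_ratio t (x a0) (x a))
        * genus_X t q x y N (M - {a0}) K"
  unfolding genus_X_def sum_distrib_left
proof (rule sum.cong[OF refl])
  fix S assume "S \<in> k_subsets N K"
  hence S: "S \<subseteq> N" using k_subsetsD[OF _ N] by blast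
  have "hirz_ratio t (y j) (x a0 / q) = hirz_ratio t (q * y j) (x a0)" for j
    using hirz_ratio_scale[OF q, of t "y j" "x a0 / q"] q by simp
  moreover have "(\<Prod>j\<in>N. hirz_ratio t (q * y j) (x a0))
      = (\<Prod>j\<in>N - S. hirz_ratio t (q * y j) (x a0)) * (\<Prod>j\<in>S. hirz_ratio t (q * y j) (x a0))"
    using prod.subset_diff[OF S N] .
  ultimately show "contrib_X t q x y N M S * (\<Prod>a\<in>M - {a0}. hirz_ratio t (x a0) (x a))
        * (\<Prod>j\<in>N - S. hirz_ratio t (y j) (x a0 / q))
      = (\<Prod>j\<in>N. hirz_ratio t (q * y j) (x a0)) * (\<Prod>a\<in>M - {a0}. hirz_ratio t (x a0) (x a))
        * contrib_X t q x y N (M - {a0}) S"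
    unfolding contrib_X_remove_right[OF M] by (simp add: ac_simps)
qed

lemma sum_contrib_Xv_insert:
  assumes M: "finite M" "a0 \<in> M"
  shows "(\<Sum>T\<in>k_subsets (M - {a0}) k. contrib_Xv t q x y N M (insert a0 T)
        * (\<Prod>a\<in>T. hirz_ratio t (x a0) (x a)))
    = (\<Prod>j\<in>N. hirz_ratio t (q * y j) (x a0)) * (\<Prod>a\<in>M - {a0}. hirz_ratio t (x a0) (x a))
        * genus_Xv t q x y N (M - {a0}) k"
  unfolding genus_Xv_def sum_distrib_left
proof (rule sum.cong[OF refl])
  fix T assume "T \<in> k_subsets (M - {a0}) k"
  hence T: "T \<subseteq> M - {a0}" using k_subsetsD[of T "M - {a0}" k] M(1) by blast
  have "(\<Prod>a\<in>M - {a0}. hirz_ratio t (x a0) (x a))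
      = (\<Prod>b\<in>M - {a0} - T. hirz_ratio t (x a0) (x b)) * (\<Prod>a\<in>T. hirz_ratio t (x a0) (x a))"
    using prod.subset_diff[OF T] M(1) by simp
  thus "contrib_Xv t q x y N M (insert a0 T) * (\<Prod>a\<in>T. hirz_ratio t (x a0) (x a))
      = (\<Prod>j\<in>N. hirz_ratio t (q * y j) (x a0)) * (\<Prod>a\<in>M - {a0}. hirz_ratio t (x a0) (x a))
        * contrib_Xv t q x y N (M - {a0}) T"
    unfolding contrib_Xv_insert[OF M T] by (simp add: ac_simps)
qed

section \<open>Deforming one weight\<close>

locale deformation =
  fixes t q :: complex and x y :: "nat \<Rightarrow> complex" and N M :: "nat set" and p K :: nat
  assumes finite_N: "finite N" and finite_M: "finite M" and p_in_N: "p \<in> N"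
    and generic: "generic_on q x y N M"
begin

lemma q_nonzero: "q \<noteq> 0"
  and x_nonzero: "a \<in> M \<Longrightarrow> x a \<noteq> 0" and y_nonzero: "j \<in> N \<Longrightarrow> y j \<noteq> 0"
  and inj_x: "inj_on x M" and inj_y: "inj_on y N"
  and qy_ne_x: "a \<in> M \<Longrightarrow> j \<in> N \<Longrightarrow> q * y j \<noteq> x a"
  using generic unfolding generic_on_def by auto

(* The two sides of the identity in degree Suc K, with y p replaced by u; the fixed points S
  are split according to whether p \<in> S. *)
definition deformed_genus_X :: "complex \<Rightarrow> complex" where
  "deformed_genus_X u =
     (\<Sum>S\<in>k_subsets (N - {p}) (Suc K). contrib_X t q x y (N - {p}) M S * (\<Prod>i\<in>S. hirz_ratio t u (y i)))
   + (\<Sum>S\<in>k_subsets (N - {p}) K. contrib_X t q x y (N - {p}) M S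
        * (\<Prod>a\<in>M. hirz_ratio t (q * u) (x a)) * (\<Prod>j\<in>N - {p} - S. hirz_ratio t (y j) u))"

definition deformed_expansion :: "complex \<Rightarrow> complex" where
  "deformed_expansion u = (\<Sum>k1\<le>card M. expansion_coeff t (card N) (card M) (Suc K) k1 *
     (\<Sum>T\<in>k_subsets M k1. contrib_Xv t q x y (N - {p}) M T * (\<Prod>a\<in>T. hirz_ratio t (q * u) (x a))))"

definition defect :: "complex \<Rightarrow> complex" where
  "defect u = deformed_genus_X u - deformed_expansion u"

definition poles :: "complex set" where
  "poles = y ` (N - {p}) \<union> (\<lambda>a. x a / q) ` M"

lemma genus_X_eq_deformed: "genus_X t q x y N M (Suc K) = deformed_genus_X (y p)"
proof -
  have N: "N = insert p (N - {p})" "finite (N - {p})" "p \<notin> N - {p}"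
    using p_in_N finite_N by auto
  have "genus_X t q x y N M (Suc K) = (\<Sum>S\<in>k_subsets (N - {p}) (Suc K). contrib_X t q x y N M S)
      + (\<Sum>S\<in>k_subsets (N - {p}) K. contrib_X t q x y N M (insert p S))"
    unfolding genus_X_def by (subst N(1), subst sum_k_subsets_insert[OF N(2,3)]) simp
  also have "\<dots> = deformed_genus_X (y p)"
    unfolding deformed_genus_X_def
    by (intro arg_cong2[where f = "(+)"] sum.cong refl)
       (auto simp: k_subsets_def contrib_X_remove[OF finite_N p_in_N]
          contrib_X_insert[OF finite_N p_in_N] ac_simps)
  finally show ?thesis .
qed

lemma Xv_expansion_eq_deformed: "Xv_expansion t q x y N M (Suc K) = deformed_expansion (y p)"
  unfolding Xv_expansion_def deformed_expansion_def genus_Xv_def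
  by (simp add: contrib_Xv_remove_left[OF finite_N p_in_N] sum_distrib_left)

lemma finite_poles: "finite poles"
  unfolding poles_def using finite_N finite_M by auto

lemma y_p_notin_poles: "y p \<notin> poles"
proof
  assume "y p \<in> poles"
  then consider j where "j \<in> N - {p}" "y p = y j" | a where "a \<in> M" "y p = x a / q"
    unfolding poles_def by auto
  thus False
  proof cases
    case 1
    thus ?thesis using inj_y p_in_N unfolding inj_on_def by auto
  next
    case 2
    thus ?thesis using qy_ne_x[OF 2(1) p_in_N] q_nonzero by (auto simp: field_simps)
  qed
qed

lemma zero_notin_poles: "0 \<notin> poles"
  unfolding poles_def using y_nonzero x_nonzero q_nonzero by auto

lemma mult_q_eq_iff: "q * u = v \<longleftrightarrow> u = v / q"
  using q_nonzero by (auto simp: field_simps)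

lemma holomorphic_on_defect: "defect holomorphic_on UNIV - poles"
  unfolding defect_def[abs_def] deformed_genus_X_def deformed_expansion_def
  by (intro holomorphic_intros) (auto simp: k_subsets_def poles_def mult_q_eq_iff)

lemma defect_tendsto_at_infinity: "\<exists>l. (defect \<longlongrightarrow> l) at_infinity"
proof -
  have id: "filterlim (\<lambda>u. u) at_infinity at_infinity"
    and scaled: "filterlim (\<lambda>u. q * u) at_infinity at_infinity"
    using q_nonzero by (auto intro: filterlim_ident tendsto_mult_filterlim_at_infinity)
  show ?thesis
    unfolding defect_def[abs_def] deformed_genus_X_def deformed_expansion_def
    by (rule exI, (rule tendsto_diff tendsto_add tendsto_sum tendsto_mult tendsto_prod tendsto_const
        tendsto_hirz_ratio_left_at_infinity tendsto_hirz_ratio_right_at_infinity id scaled)+)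
qed

lemma defect_removable_at_y:
  assumes i0: "i0 \<in> N - {p}"
  shows "removable_pole defect poles (y i0)"
proof -
  define c N2 where "c = y i0" and "N2 = N - {p} - {i0}"
  have N': "N - {p} = insert i0 N2" "finite N2" "i0 \<notin> N2" using i0 finite_N by (auto simp: N2_def)
  define cX where "cX = contrib_X t q x y (N - {p}) M"
  define PM where "PM u = (\<Prod>a\<in>M. hirz_ratio t (q * u) (x a))" for u
  define A where "A u = (\<Sum>S\<in>k_subsets N2 (Suc K). cX S * (\<Prod>i\<in>S. hirz_ratio t u (y i)))
      + (if K = 0 then 0 else
          \<Sum>S\<in>k_subsets N2 (K - 1). cX (insert i0 S) * PM u * (\<Prod>j\<in>N2 - S. hirz_ratio t (y j) u))
      - deformed_expansion u" for u
  define B1 where "B1 u = (\<Sum>S\<in>k_subsets N2 K. cX (insert i0 S) * (\<Prod>i\<in>S. hirz_ratio t u (y i)))" for u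
  define B2 where "B2 u = (\<Sum>S\<in>k_subsets N2 K. cX S * PM u * (\<Prod>j\<in>N2 - S. hirz_ratio t (y j) u))" for u
  have "y i \<noteq> c" if "i \<in> N2" for i
    using that inj_y i0 unfolding c_def N2_def inj_on_def by auto
  moreover have "x a / q \<noteq> c" if "a \<in> M" for a
    using qy_ne_x[OF that, of i0] i0 q_nonzero unfolding c_def by (auto simp: field_simps)
  ultimately have "A holomorphic_on UNIV - (poles - {c})" "B1 holomorphic_on UNIV - (poles - {c})"
      "B2 holomorphic_on UNIV - (poles - {c})"
    unfolding A_def[abs_def] B1_def[abs_def] B2_def[abs_def] PM_def deformed_expansion_def
    by (intro holomorphic_intros; auto simp: k_subsets_def poles_def mult_q_eq_iff N2_def)+
  moreover have "B1 c = B2 c" \<comment> \<open>exchanging p and i0 in the fixed points\<close>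
    unfolding B1_def B2_def
  proof (rule sum.cong[OF refl])
    fix S assume "S \<in> k_subsets N2 K"
    hence "S \<subseteq> N - {p} - {i0}" using k_subsetsD[OF _ N'(2)] unfolding N2_def by blast
    thus "cX (insert i0 S) * (\<Prod>i\<in>S. hirz_ratio t c (y i)) = cX S * PM c * (\<Prod>j\<in>N2 - S. hirz_ratio t (y j) c)"
      using contrib_X_insert_mult[OF _ i0] finite_N by (simp add: cX_def N2_def c_def PM_def)
  qed
  moreover have "defect u = A u + hirz_ratio t u c * B1 u + hirz_ratio t c u * B2 u" for u
    unfolding defect_def deformed_genus_X_def cX_def[symmetric] PM_def[symmetric] N'(1)
      sum_k_subsets_insert_prod[OF N'(2,3)] sum_k_subsets_insert_prod_compl[OF N'(2,3)]
    by (simp add: A_def B1_def B2_def c_def cX_def N'(1) algebra_simps)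
  moreover have "c \<in> poles" using i0 unfolding poles_def c_def by auto
  ultimately show ?thesis unfolding c_def by (intro removable_pole_hirz_ratio_pair) auto
qed

lemma residues_at_x_pole_agree:
  assumes a0: "a0 \<in> M"
    and IH: "genus_X t q x y (N - {p}) (M - {a0}) K = Xv_expansion t q x y (N - {p}) (M - {a0}) K"
  shows "(\<Sum>S\<in>k_subsets (N - {p}) K. contrib_X t q x y (N - {p}) M S
        * (\<Prod>a\<in>M - {a0}. hirz_ratio t (x a0) (x a)) * (\<Prod>j\<in>N - {p} - S. hirz_ratio t (y j) (x a0 / q)))
    = (\<Sum>k1\<le>card M. expansion_coeff t (card N) (card M) (Suc K) k1 * (if k1 = 0 then 0 else
        \<Sum>T\<in>k_subsets (M - {a0}) (k1 - 1). contrib_Xv t q x y (N - {p}) M (insert a0 T)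
          * (\<Prod>a\<in>T. hirz_ratio t (x a0) (x a))))"
proof -
  define P where "P = (\<Prod>j\<in>N - {p}. hirz_ratio t (q * y j) (x a0)) * (\<Prod>a\<in>M - {a0}. hirz_ratio t (x a0) (x a))"
  have card: "card M = Suc (card (M - {a0}))" "card (N - {p}) = card N - 1"
    using card_Suc_Diff1[OF finite_M a0, symmetric] finite_N p_in_N by auto
  have "(\<Sum>k1\<le>card M. expansion_coeff t (card N) (card M) (Suc K) k1
      * (if k1 = 0 then 0 else genus_Xv t q x y (N - {p}) (M - {a0}) (k1 - 1)))
      = Xv_expansion t q x y (N - {p}) (M - {a0}) K"
    unfolding card(1) sum.atMost_Suc_shift Xv_expansion_def
    by (simp add: card expansion_coeff_Suc_Suc)
  hence "(\<Sum>S\<in>k_subsets (N - {p}) K. contrib_X t q x y (N - {p}) M S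
        * (\<Prod>a\<in>M - {a0}. hirz_ratio t (x a0) (x a)) * (\<Prod>j\<in>N - {p} - S. hirz_ratio t (y j) (x a0 / q)))
      = P * (\<Sum>k1\<le>card M. expansion_coeff t (card N) (card M) (Suc K) k1
          * (if k1 = 0 then 0 else genus_Xv t q x y (N - {p}) (M - {a0}) (k1 - 1)))"
    using sum_contrib_X_at_x_pole[of "N - {p}" M a0 q t x y K] finite_N finite_M a0 q_nonzero IH
    by (simp add: P_def)
  also have "\<dots> = (\<Sum>k1\<le>card M. expansion_coeff t (card N) (card M) (Suc K) k1 * (if k1 = 0 then 0 else
        \<Sum>T\<in>k_subsets (M - {a0}) (k1 - 1). contrib_Xv t q x y (N - {p}) M (insert a0 T)
          * (\<Prod>a\<in>T. hirz_ratio t (x a0) (x a))))"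
    unfolding sum_distrib_left
    by (intro sum.cong refl) (simp add: P_def sum_contrib_Xv_insert[OF finite_M a0])
  finally show ?thesis .
qed

lemma defect_removable_at_x:
  assumes a0: "a0 \<in> M"
    and IH: "genus_X t q x y (N - {p}) (M - {a0}) K = Xv_expansion t q x y (N - {p}) (M - {a0}) K"
  shows "removable_pole defect poles (x a0 / q)"
proof -
  define c M2 where "c = x a0 / q" and "M2 = M - {a0}"
  have M: "M = insert a0 M2" "finite M2" "a0 \<notin> M2" using a0 finite_M by (auto simp: M2_def)
  define cf where "cf = expansion_coeff t (card N) (card M) (Suc K)"
  define A where "A u = (\<Sum>S\<in>k_subsets (N - {p}) (Suc K). contrib_X t q x y (N - {p}) M S
        * (\<Prod>i\<in>S. hirz_ratio t u (y i)))
      - (\<Sum>k1\<le>card M. cf k1 * (\<Sum>T\<in>k_subsets M2 k1. contrib_Xv t q x y (N - {p}) M T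
        * (\<Prod>a\<in>T. hirz_ratio t (q * u) (x a))))" for u
  define B where "B u = (\<Sum>S\<in>k_subsets (N - {p}) K. contrib_X t q x y (N - {p}) M S
        * (\<Prod>a\<in>M2. hirz_ratio t (q * u) (x a)) * (\<Prod>j\<in>N - {p} - S. hirz_ratio t (y j) u))
      - (\<Sum>k1\<le>card M. cf k1 * (if k1 = 0 then 0 else
          \<Sum>T\<in>k_subsets M2 (k1 - 1). contrib_Xv t q x y (N - {p}) M (insert a0 T)
            * (\<Prod>a\<in>T. hirz_ratio t (q * u) (x a))))" for u
  have "y i \<noteq> c" if "i \<in> N" for i
    using qy_ne_x[OF a0 that] q_nonzero unfolding c_def by (auto simp: field_simps)
  moreover have "x a / q \<noteq> c" if "a \<in> M2" for a
    using that inj_x a0 q_nonzero unfolding c_def M2_def inj_on_def by (auto simp: field_simps)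
  ultimately have "UNIV - (poles - {c}) \<subseteq> UNIV - (y ` (N - {p}) \<union> (\<lambda>a. x a / q) ` M2)"
    unfolding poles_def M2_def by auto
  moreover have "A holomorphic_on UNIV - (y ` (N - {p}) \<union> (\<lambda>a. x a / q) ` M2)"
    "B holomorphic_on UNIV - (y ` (N - {p}) \<union> (\<lambda>a. x a / q) ` M2)"
    unfolding A_def[abs_def] B_def[abs_def] M2_def
    by (intro holomorphic_intros; auto simp: k_subsets_def mult_q_eq_iff)+
  ultimately have "A holomorphic_on UNIV - (poles - {c})" "B holomorphic_on UNIV - (poles - {c})"
    by (auto intro: holomorphic_on_subset)
  moreover have "B c = 0"
  proof -
    have qc: "q * c = x a0" using q_nonzero unfolding c_def by simp
    show ?thesis
      using residues_at_x_pole_agree[OF a0 IH] unfolding B_def M2_def cf_def qc unfolding c_def by simp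
  qed
  moreover have "defect u = A u + hirz_ratio t (q * u) (x a0) * B u" for u
  proof -
    have ks: "k_subsets M = k_subsets (insert a0 M2)" using M(1) by simp
    have "(\<Prod>a\<in>M. hirz_ratio t (q * u) (x a))
        = hirz_ratio t (q * u) (x a0) * (\<Prod>a\<in>M2. hirz_ratio t (q * u) (x a))"
      using M by simp
    moreover have "g * (if b then 0 else z) = (if b then 0 else g * z)" for g z :: complex and b
      by simp
    ultimately show ?thesis
      unfolding defect_def deformed_genus_X_def deformed_expansion_def ks
        sum_k_subsets_insert_prod[OF M(2,3)]
      by (simp add: A_def B_def cf_def sum_distrib_left sum.distrib sum_subtractf algebra_simps
          cong: if_cong)
  qed
  moreover have "c \<in> poles" using a0 unfolding poles_def c_def by auto
  ultimately show ?thesis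
    using q_nonzero unfolding c_def by (intro removable_pole_hirz_ratio_scaled) auto
qed

lemma defect_0:
  "defect 0 = t ^ Suc K * genus_X t q x y (N - {p}) M (Suc K) + t ^ card M * genus_X t q x y (N - {p}) M K
     - (\<Sum>k1\<le>card M. expansion_coeff t (card N) (card M) (Suc K) k1 * t ^ k1
          * genus_Xv t q x y (N - {p}) M k1)"
proof -
  have "(\<Prod>i\<in>S. hirz_ratio t 0 (y i)) = t ^ k" if "S \<in> k_subsets (N - {p}) k" for S k
  proof -
    have "(\<Prod>i\<in>S. hirz_ratio t 0 (y i)) = (\<Prod>i\<in>S. t)"
      using that y_nonzero by (intro prod.cong) (auto simp: k_subsets_def hirz_ratio_0_left)
    thus ?thesis using that by (simp add: k_subsets_def)
  qed
  moreover have "(\<Prod>a\<in>T. hirz_ratio t 0 (x a)) = t ^ k" if "T \<in> k_subsets M k" for T k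
  proof -
    have "(\<Prod>a\<in>T. hirz_ratio t 0 (x a)) = (\<Prod>a\<in>T. t)"
      using that x_nonzero by (intro prod.cong) (auto simp: k_subsets_def hirz_ratio_0_left)
    thus ?thesis using that by (simp add: k_subsets_def)
  qed
  moreover have "(\<Prod>j\<in>N - {p} - S. hirz_ratio t (y j) 0) = 1" for S
    using y_nonzero by (auto simp: hirz_ratio_0_right)
  moreover have "(\<Prod>a\<in>M. hirz_ratio t 0 (x a)) = t ^ card M"
    using x_nonzero by (simp add: hirz_ratio_0_left)
  ultimately show ?thesis
    unfolding defect_def deformed_genus_X_def deformed_expansion_def genus_X_def genus_Xv_def
    by (simp add: sum_distrib_left sum_distrib_right ac_simps cong: sum.cong)
qed

lemma defect_0_eq_0_if_card_less:
  assumes "card M < card N"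
    and IH: "\<And>j. genus_X t q x y (N - {p}) M j = Xv_expansion t q x y (N - {p}) M j"
  shows "defect 0 = 0"
proof -
  define L R where "L j = genus_X t q x y (N - {p}) M j" and "R j = genus_Xv t q x y (N - {p}) M j" for j
  have card: "card (N - {p}) = card N - 1" using finite_N p_in_N by simp
  have "defect 0 = (\<Sum>k1\<le>card M. (t ^ Suc K * expansion_coeff t (card N - 1) (card M) (Suc K) k1
      + t ^ card M * expansion_coeff t (card N - 1) (card M) K k1
      - expansion_coeff t (card N) (card M) (Suc K) k1 * t ^ k1) * R k1)"
    unfolding defect_0 IH Xv_expansion_def card
    by (simp add: R_def sum_distrib_left sum.distrib sum_subtractf algebra_simps)
  also have "\<dots> = 0"
  proof (intro sum.neutral ballI)
    fix k1 assume "k1 \<in> {..card M}"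
    thus "(t ^ Suc K * expansion_coeff t (card N - 1) (card M) (Suc K) k1
      + t ^ card M * expansion_coeff t (card N - 1) (card M) K k1
      - expansion_coeff t (card N) (card M) (Suc K) k1 * t ^ k1) * R k1 = 0"
      using expansion_coeff_pascal[OF assms(1), of k1 t K] by simp
  qed
  finally show ?thesis .
qed

(* Here the identity for (N - {p}, M) is not available, as card M > card (N - {p}). *)
lemma defect_0_eq_0_if_card_eq:
  assumes card_eq: "card M = card N" and K: "Suc K \<le> card N"
    and IH_dual: "genus_X t q (\<lambda>j. 1 / y j) (\<lambda>a. 1 / x a) M (N - {p}) (Suc K)
      = Xv_expansion t q (\<lambda>j. 1 / y j) (\<lambda>a. 1 / x a) M (N - {p}) (Suc K)"
  shows "defect 0 = 0"
proof -
  define L R where "L j = genus_X t q x y (N - {p}) M j" and "R j = genus_Xv t q x y (N - {p}) M j" for j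
  obtain n where n: "card N = Suc n" "card (N - {p}) = n" "K \<le> n"
    using K finite_N p_in_N by (cases "card N") auto
  have generic': "generic_on q x y (N - {p}) M" using generic_on_subset[OF generic] by blast
  have "R (Suc K) = (\<Sum>k1\<le>n. expansion_coeff t (Suc n) n (Suc K) k1 * L k1)"
    using IH_dual genus_Xv_eq_genus_X_dual[OF generic_on_dual[OF generic']]
    unfolding R_def L_def genus_Xv_eq_genus_X_dual[OF generic'] Xv_expansion_def
    by (simp add: card_eq n)
  also have "\<dots> = (\<Sum>k1\<le>n. (if k1 = Suc K then L (Suc K) else 0) + (if k1 = K then t ^ (n - K) * L K else 0))"
    by (intro sum.cong refl) (simp add: expansion_coeff_corank_1[OF n(3)])
  also have "\<dots> = L (Suc K) + t ^ (n - K) * L K"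
    using n genus_X_eq_0[of "N - {p}" "Suc K"] finite_N by (simp add: sum.distrib L_def)
  finally have R_Suc: "R (Suc K) = L (Suc K) + t ^ (n - K) * L K" .
  have "(\<Sum>k1\<le>card M. expansion_coeff t (card N) (card M) (Suc K) k1 * t ^ k1 * R k1)
      = (\<Sum>k1\<le>card N. if k1 = Suc K then t ^ Suc K * R (Suc K) else 0)"
    unfolding card_eq expansion_coeff_diag by (intro sum.cong) auto
  also have "\<dots> = t ^ Suc K * R (Suc K)" using K by simp
  finally have "defect 0 = t ^ Suc K * L (Suc K) + t ^ Suc n * L K - t ^ Suc K * R (Suc K)"
    by (simp add: defect_0 L_def R_def card_eq n(1))
  also have "t ^ Suc n = t ^ Suc K * t ^ (n - K)" using n(3) by (simp flip: power_add)
  finally show ?thesis unfolding R_Suc by (simp add: algebra_simps)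
qed

lemma genus_X_Suc_eq_Xv_expansion:
  assumes IH: "\<And>a0. a0 \<in> M \<Longrightarrow>
      genus_X t q x y (N - {p}) (M - {a0}) K = Xv_expansion t q x y (N - {p}) (M - {a0}) K"
    and "defect 0 = 0"
  shows "genus_X t q x y N M (Suc K) = Xv_expansion t q x y N M (Suc K)"
proof -
  have "removable_pole defect poles c" if "c \<in> poles" for c
    using that defect_removable_at_y defect_removable_at_x IH unfolding poles_def by auto
  moreover obtain l where "(defect \<longlongrightarrow> l) at_infinity" using defect_tendsto_at_infinity by blast
  ultimately have "defect (y p) = defect 0"
    using eq_limit_at_infinity_if_poles_removable[OF finite_poles holomorphic_on_defect]
      y_p_notin_poles zero_notin_poles by metis
  thus ?thesis
    using assms(2) genus_X_eq_deformed Xv_expansion_eq_deformed unfolding defect_def by simp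
qed

end

theorem genus_X_eq_Xv_expansion:
  assumes "finite N" "finite M" "card M \<le> card N" "generic_on q x y N M"
  shows "genus_X t q x y N M k = Xv_expansion t q x y N M k"
  using assms
proof (induction "card N + card M" arbitrary: N M x y k rule: less_induct)
  case less
  note finite = less.prems(1,2) and card_le = less.prems(3) and generic = less.prems(4)
  consider (big) "card N < k" | (zero) "k = 0" | (step) K where "k = Suc K" "Suc K \<le> card N"
    by (cases k; cases "card N < k") (auto simp: not_less)
  thus ?case
  proof cases
    case big
    thus ?thesis
      using finite card_le by (simp add: genus_X_eq_0 Xv_expansion_def expansion_coeff_eq_0)
  next
    case zero
    thus ?thesis using finite by (simp add: genus_X_0 genus_Xv_0 Xv_expansion_0)
  next
    case step
    obtain p where p: "p \<in> N" using step(2) by (cases "N = {}") auto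
    interpret deformation t q x y N M p K using finite p generic by unfold_locales
    have card_N: "card (N - {p}) = card N - 1" "0 < card N" using finite p by (auto simp: card_gt_0_iff)
    have generic': "generic_on q x y (N - {p}) M" using generic_on_subset[OF generic] by blast
    have "genus_X t q x y (N - {p}) (M - {a0}) K = Xv_expansion t q x y (N - {p}) (M - {a0}) K"
      if "a0 \<in> M" for a0
      using that finite card_le card_N generic_on_subset[OF generic', of _ "M - {a0}"] card_gt_0_iff[of M]
      by (intro less.hyps) auto
    moreover have "defect 0 = 0"
    proof (cases "card M < card N")
      case True
      thus ?thesis using finite card_N generic'
        by (intro defect_0_eq_0_if_card_less less.hyps) auto
    next
      case False
      thus ?thesis using finite card_le card_N step(2) generic_on_dual[OF generic']
        by (intro defect_0_eq_0_if_card_eq less.hyps) auto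
    qed
    ultimately show ?thesis unfolding step(1) by (rule genus_X_Suc_eq_Xv_expansion)
  qed
qed

theorem theorem2p6:
  fixes k n m :: nat and s q :: complex and x y :: "nat \<Rightarrow> complex"
  assumes "m < n" and "1 \<le> k" and "k \<le> n"
    and "s \<noteq> 0" and "generic_point n m q x y"
  shows "chiX k n m (s^2) q x y =
    (\<Sum>k1\<in>{0..min k m}. let k2 = k - k1 in
        s powi (2 * int k2 * (int m - int k1) + int k2 * (int n - int m - int k2))
        * char_wedge_rho k2 (n - m) s
        * chiXv k1 n m (s^2) q x y)"
proof -
  have "chiX k n m (s\<^sup>2) q x y = Xv_expansion (s\<^sup>2) q x y {..<n} {..<m} k"
    using assms(1,5) by (simp add: chiX_eq_genus_X genus_X_eq_Xv_expansion generic_point_iff_generic_on)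
  also have "\<dots> = (\<Sum>k1\<in>{0..min k m}. expansion_coeff (s\<^sup>2) n m k k1 * chiXv k1 n m (s\<^sup>2) q x y)"
    unfolding Xv_expansion_def chiXv_eq_genus_Xv[OF assms(5)] card_lessThan
    by (rule sum.mono_neutral_right) (auto simp: expansion_coeff_def)
  also have "\<dots> = (\<Sum>k1\<in>{0..min k m}. let k2 = k - k1 in
        s powi (2 * int k2 * (int m - int k1) + int k2 * (int n - int m - int k2))
        * char_wedge_rho k2 (n - m) s
        * chiXv k1 n m (s^2) q x y)"
    using assms(1,4) by (intro sum.cong refl) (simp add: expansion_coeff_eq_char_wedge_rho Let_def)
  finally show ?thesis .
qed

end
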